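(* Let $\Phi=\{\varphi_j\}_{j=1}^n\subset\mathbb{C}^d$ be a doubly transitive (i.e. doubly covariant) equiangular tight frame with $n>d$. Then for all pairwise distinct $j,k,\ell\in\{1,\dots,n\}$ there exists a $2n$-th root of unity $\zeta_{j,k,\ell}$ such that \[\langle\varphi_j,\varphi_k\rangle\langle\varphi_k,\varphi_\ell\rangle\langle\varphi_\ell,\varphi_j\rangle=\zeta_{j,k,\ell}\left(\frac{n-d}{d(n-1)}\right)^{3/2}.\]
   Context: A set $\Phi=\{\varphi_j\}_{j=1}^n\subset\mathbb{C}^d$ is an equiangular tight frame (ETF) if (1) for all $x\in\mathbb{C}^d$, $x=\frac{d}{n}\sum_{j=1}^n\langle x,\varphi_j\rangle\varphi_j$; (2) $\|\varphi_j\|=1$ for all $j$; (3) there is $\alpha\ge 0$ with $|\langle\varphi_j,\varphi_k\rangle|=\alpha$ for all $j\neq k$. Let $G$ be the group of unitary operators $U$ on $\mathbb{C}^d$ such that there is a permutation $\sigma$ of $\{1,\dots,n\}$ with $U\varphi_j\varphi_j^*U^*=\varphi_{\sigma(j)}\varphi_{\sigma(j)}^*$ for all $j$; the symmetry group of $\Phi$ is $G/S^1$, which acts on $\{1,\dots,n\}$ via these permutations. $\Phi$ is doubly transitive (doubly covariant) if this action is $2$-transitive, i.e. maps every ordered pair of distinct indices to every ordered pair of distinct indices. *)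

theory Defs
  imports "HOL-Analysis.Analysis" "HOL-Combinatorics.Permutations"
begin

text \<open>Vectors in C^d are represented as complex ^ 'd, with d = CARD('d).
  The inner product is linear in the first argument, conjugate-linear in the second.\<close>

definition cinner :: "complex ^ 'd \<Rightarrow> complex ^ 'd \<Rightarrow> complex" where
  "cinner x y = (\<Sum>i\<in>UNIV. x $ i * cnj (y $ i))"

definition cnorm :: "complex ^ 'd \<Rightarrow> real" where
  "cnorm x = sqrt (Re (cinner x x))"

definition adjoint_mat :: "complex ^ 'd ^ 'd \<Rightarrow> complex ^ 'd ^ 'd" where
  "adjoint_mat U = (\<chi> i j. cnj (U $ j $ i))"

definition unitary_mat :: "complex ^ 'd ^ 'd \<Rightarrow> bool" where
  "unitary_mat U \<longleftrightarrow> U ** adjoint_mat U = mat 1 \<and> adjoint_mat U ** U = mat 1"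

definition outer :: "complex ^ 'd \<Rightarrow> complex ^ 'd ^ 'd" where
  "outer v = (\<chi> i j. v $ i * cnj (v $ j))"

definition is_ETF :: "nat \<Rightarrow> (nat \<Rightarrow> complex ^ 'd) \<Rightarrow> bool" where
  "is_ETF n \<phi> \<longleftrightarrow>
     (\<forall>x::complex^'d. x = (\<Sum>j\<in>{1..n}. (complex_of_real (real CARD('d) / real n) * cinner x (\<phi> j)) *s \<phi> j)) \<and>
     (\<forall>j\<in>{1..n}. cnorm (\<phi> j) = 1) \<and>
     (\<exists>\<alpha>::real. \<alpha> \<ge> 0 \<and> (\<forall>j\<in>{1..n}. \<forall>k\<in>{1..n}. j \<noteq> k \<longrightarrow> cmod (cinner (\<phi> j) (\<phi> k)) = \<alpha>))"

definition sym_unitary :: "nat \<Rightarrow> (nat \<Rightarrow> complex ^ 'd) \<Rightarrow> complex ^ 'd ^ 'd \<Rightarrow> (nat \<Rightarrow> nat) \<Rightarrow> bool" where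
  "sym_unitary n \<phi> U \<sigma> \<longleftrightarrow> unitary_mat U \<and> \<sigma> permutes {1..n} \<and>
     (\<forall>j\<in>{1..n}. U ** outer (\<phi> j) ** adjoint_mat U = outer (\<phi> (\<sigma> j)))"

definition doubly_transitive :: "nat \<Rightarrow> (nat \<Rightarrow> complex ^ 'd) \<Rightarrow> bool" where
  "doubly_transitive n \<phi> \<longleftrightarrow>
     (\<forall>j\<in>{1..n}. \<forall>k\<in>{1..n}. \<forall>j'\<in>{1..n}. \<forall>k'\<in>{1..n}. j \<noteq> k \<longrightarrow> j' \<noteq> k' \<longrightarrow>
        (\<exists>U \<sigma>. sym_unitary n \<phi> U \<sigma> \<and> \<sigma> j = j' \<and> \<sigma> k = k'))"

end

theory Submission
  imports Defs
begin

text \<open>A symmetry U with permutation \<sigma> sends each \<phi> j to a unimodular multiple of \<phi> (\<sigma> j),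
  so it acts on the Gram matrix G by permuting indices and by a diagonal unitary
  conjugation G p q \<mapsto> t p * cnj (t q) * G p q. The quantity
  phase_invariant p q = R p * cnj (R q) * cnj (G p q) ^ n, where R p = row_prod p is the
  product of the off-diagonal entries of row p, is invariant under both: the phases
  t p ^ n * \<Prod> cnj t picked up by R p are cancelled by those of R q and of G p q.
  Double transitivity therefore makes it constant on pairs of distinct indices, and as it is
  conjugated by swapping p and q, this constant is real. Multiplying it around a triangle
  j, k, l gives a positive real times cnj (G j k * G k l * G l j) ^ n, so the n-th power of
  the triple product is real. Its modulus is \<alpha>^3, where the Welch bound equality
  \<alpha>^2 = (n - d) / (d (n - 1)) follows from the tight frame identity.\<close>

lemma cnj_cinner: "cnj (cinner x y) = cinner y x"
  unfolding cinner_def by (simp add: mult.commute)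

lemma cinner_sum_left: "cinner (sum f A) y = (\<Sum>k\<in>A. cinner (f k) y)"
  unfolding cinner_def by (simp add: sum_distrib_right sum.swap[of _ A])

lemma cinner_smult_left: "cinner (c *s x) y = c * cinner x y"
  unfolding cinner_def by (simp add: sum_distrib_left mult.assoc)

lemma cinner_smult_right: "cinner x (c *s y) = cnj c * cinner x y"
  unfolding cinner_def by (simp add: sum_distrib_left mult_ac)

lemma cinner_self_eq_sum_norm: "cinner x x = of_real (\<Sum>i\<in>UNIV. (cmod (x $ i))\<^sup>2)"
  unfolding cinner_def of_real_sum complex_norm_square by simp

lemma cinner_matrix_vector_left: "cinner (U *v x) z = cinner x (adjoint_mat U *v z)"
proof -
  have "cinner (U *v x) z = (\<Sum>i\<in>UNIV. \<Sum>a\<in>UNIV. U $ i $ a * x $ a * cnj (z $ i))"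
    unfolding cinner_def matrix_vector_mult_def by (simp add: sum_distrib_right)
  also have "\<dots> = (\<Sum>a\<in>UNIV. \<Sum>i\<in>UNIV. U $ i $ a * x $ a * cnj (z $ i))"
    by (rule sum.swap)
  also have "\<dots> = cinner x (adjoint_mat U *v z)"
    unfolding cinner_def adjoint_mat_def matrix_vector_mult_def
    by (simp add: sum_distrib_left mult_ac)
  finally show ?thesis .
qed

lemma cinner_unitary:
  assumes "unitary_mat U"
  shows "cinner (U *v x) (U *v y) = cinner x y"
  using assms unfolding unitary_mat_def
  by (simp add: cinner_matrix_vector_left matrix_vector_mul_assoc)

lemma outer_conjugate: "U ** outer v ** adjoint_mat U = outer (U *v v)"
  unfolding outer_def adjoint_mat_def matrix_matrix_mult_def matrix_vector_mult_def
  by (simp add: vec_eq_iff sum_distrib_left sum_distrib_right mult_ac)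

lemma outer_mult_vector: "outer u *v v = cinner v u *s u"
  unfolding outer_def matrix_vector_mult_def cinner_def
  by (simp add: vec_eq_iff sum_distrib_left mult_ac)

lemma outer_eq_imp_unimodular_multiple:
  assumes "outer u = outer v" and "cinner v v = 1"
  shows "\<exists>t. cmod t = 1 \<and> v = t *s u"
proof -
  define c where "c = cinner v u"
  have "v = outer v *v v" using assms(2) by (simp only: outer_mult_vector vector_smult_lid)
  also have "\<dots> = c *s u" unfolding c_def assms(1)[symmetric] by (rule outer_mult_vector)
  finally have v: "v = c *s u" .
  have "u $ i * cnj (u $ i) = v $ i * cnj (v $ i)" for i
    using arg_cong[OF assms(1), of "\<lambda>A. A $ i $ i"] unfolding outer_def by simp
  then have "cinner u u = 1"
    using assms(2) unfolding cinner_def by simp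
  then have "of_real ((cmod c)\<^sup>2) = cinner (c *s u) (c *s u)"
    by (simp only: cinner_smult_left cinner_smult_right complex_norm_square
        mult_1_right mult_1_left mult.commute)
  also have "\<dots> = 1" using assms(2) v by simp
  finally have "(cmod c)\<^sup>2 = 1" by (metis of_real_eq_1_iff)
  then have "cmod c = 1" using norm_ge_zero[of c] by (auto simp: power2_eq_1_iff)
  with v show ?thesis by blast
qed

lemma unimodular_mult_cnj: "cmod t = 1 \<Longrightarrow> t * cnj t = 1"
  by (metis complex_norm_square of_real_1 power_one)

definition row_prod :: "'a set \<Rightarrow> ('a \<Rightarrow> 'a \<Rightarrow> complex) \<Rightarrow> 'a \<Rightarrow> complex" where
  "row_prod I g p = (\<Prod>r\<in>I - {p}. g p r)"

definition phase_invariant :: "'a set \<Rightarrow> ('a \<Rightarrow> 'a \<Rightarrow> complex) \<Rightarrow> 'a \<Rightarrow> 'a \<Rightarrow> complex" where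
  "phase_invariant I g p q = row_prod I g p * cnj (row_prod I g q) * cnj (g p q) ^ card I"

lemma row_prod_phase_permute:
  assumes "finite I" and \<sigma>: "\<sigma> permutes I" and p: "p \<in> I"
    and t: "\<forall>r\<in>I. cmod (t r) = 1"
    and g: "\<forall>p\<in>I. \<forall>q\<in>I. g (\<sigma> p) (\<sigma> q) = t p * cnj (t q) * g p q"
  shows "row_prod I g (\<sigma> p) = t p ^ card I * (\<Prod>r\<in>I. cnj (t r)) * row_prod I g p"
proof -
  have bij: "bij_betw \<sigma> (I - {p}) (I - {\<sigma> p})"
    using permutes_imp_bij[OF \<sigma>] p permutes_in_image[OF \<sigma>] by (intro bij_betw_DiffI) auto
  have card: "card I = Suc (card (I - {p}))"
    by (rule card_Suc_Diff1[OF assms(1) p, symmetric])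
  have "row_prod I g (\<sigma> p) = (\<Prod>r\<in>I - {p}. g (\<sigma> p) (\<sigma> r))"
    unfolding row_prod_def using prod.reindex_bij_betw[OF bij, of "g (\<sigma> p)"] by simp
  also have "\<dots> = (\<Prod>r\<in>I - {p}. t p * cnj (t r) * g p r)"
    using g p by (intro prod.cong) auto
  also have "\<dots> = t p ^ card (I - {p}) * (\<Prod>r\<in>I - {p}. cnj (t r)) * row_prod I g p"
    unfolding row_prod_def by (simp add: prod.distrib)
  also have "\<dots> = t p ^ card (I - {p}) * (t p * cnj (t p)) * (\<Prod>r\<in>I - {p}. cnj (t r))
      * row_prod I g p"
    using unimodular_mult_cnj t p by simp
  also have "\<dots> = t p ^ Suc (card (I - {p})) * (cnj (t p) * (\<Prod>r\<in>I - {p}. cnj (t r)))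
      * row_prod I g p"
    by (simp only: power_Suc2 mult_ac)
  also have "\<dots> = t p ^ card I * (\<Prod>r\<in>I. cnj (t r)) * row_prod I g p"
    by (simp only: card[symmetric] prod.remove[OF assms(1) p])
  finally show ?thesis .
qed

lemma phase_invariant_permute:
  assumes "finite I" and \<sigma>: "\<sigma> permutes I" and p: "p \<in> I" and q: "q \<in> I"
    and t: "\<forall>r\<in>I. cmod (t r) = 1"
    and g: "\<forall>p\<in>I. \<forall>q\<in>I. g (\<sigma> p) (\<sigma> q) = t p * cnj (t q) * g p q"
  shows "phase_invariant I g (\<sigma> p) (\<sigma> q) = phase_invariant I g p q"
proof -
  define P where "P = (\<Prod>r\<in>I. cnj (t r))"
  have "P * cnj P = (\<Prod>r\<in>I. cnj (t r) * t r)"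
    unfolding P_def by (simp add: prod.distrib)
  also have "\<dots> = 1"
    using t unimodular_mult_cnj by (intro prod.neutral) (auto simp: mult.commute)
  finally have P: "P * cnj P = 1" .
  have "phase_invariant I g (\<sigma> p) (\<sigma> q)
      = (t p * cnj (t p)) ^ card I * (t q * cnj (t q)) ^ card I * (P * cnj P)
        * phase_invariant I g p q"
    unfolding phase_invariant_def P_def
    using row_prod_phase_permute[OF assms(1,2) p t g] row_prod_phase_permute[OF assms(1,2) q t g]
      g p q
    by (simp add: power_mult_distrib mult_ac)
  also have "\<dots> = phase_invariant I g p q"
    using unimodular_mult_cnj t p q P by simp
  finally show ?thesis .
qed

lemma phase_invariant_swap:
  assumes "g q p = cnj (g p q)"
  shows "phase_invariant I g q p = cnj (phase_invariant I g p q)"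
  unfolding phase_invariant_def using assms by (simp add: mult_ac)

lemma phase_invariant_triangle:
  "phase_invariant I g j k * phase_invariant I g k l * phase_invariant I g l j =
     of_real ((cmod (row_prod I g j))\<^sup>2 * (cmod (row_prod I g k))\<^sup>2 * (cmod (row_prod I g l))\<^sup>2)
     * cnj (g j k * g k l * g l j) ^ card I"
  unfolding phase_invariant_def of_real_mult complex_norm_square
  by (simp add: power_mult_distrib mult_ac)

lemma triangle_power_real_if_phase_invariant_const:
  assumes "finite I"
    and hermitian: "\<forall>p\<in>I. \<forall>q\<in>I. g q p = cnj (g p q)"
    and nonzero: "\<forall>p\<in>I. \<forall>q\<in>I. p \<noteq> q \<longrightarrow> g p q \<noteq> 0"
    and const: "\<forall>p\<in>I. \<forall>q\<in>I. \<forall>p'\<in>I. \<forall>q'\<in>I. p \<noteq> q \<longrightarrow> p' \<noteq> q' \<longrightarrow>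
      phase_invariant I g p q = phase_invariant I g p' q'"
    and "j \<in> I" "k \<in> I" "l \<in> I" "j \<noteq> k" "k \<noteq> l" "j \<noteq> l"
  shows "(g j k * g k l * g l j) ^ card I \<in> \<real>"
proof -
  define T where "T = g j k * g k l * g l j"
  define Q where "Q = phase_invariant I g j k"
  have Q_eq: "phase_invariant I g p q = Q" if "p \<in> I" "q \<in> I" "p \<noteq> q" for p q
    using const[rule_format, OF that(1,2) assms(5,6) that(3) assms(8)] unfolding Q_def .
  have "cnj Q = phase_invariant I g k j"
    unfolding Q_def using hermitian[rule_format, OF assms(5,6)]
    by (rule phase_invariant_swap[symmetric])
  also have "\<dots> = Q" using Q_eq assms(5,6,8) by simp
  finally have "Q \<in> \<real>" by (simp add: Reals_cnj_iff)
  define X where "X = (cmod (row_prod I g j))\<^sup>2 * (cmod (row_prod I g k))\<^sup>2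
      * (cmod (row_prod I g l))\<^sup>2"
  have "row_prod I g p \<noteq> 0" if "p \<in> I" for p
    using nonzero that assms(1) unfolding row_prod_def by auto
  then have "X \<noteq> 0" unfolding X_def using assms(5-7) by simp
  moreover have "Q ^ 3 = of_real X * cnj T ^ card I"
    using phase_invariant_triangle[of I g j k l] Q_eq[OF assms(5,6,8)] Q_eq[OF assms(6,7,9)]
      Q_eq[OF assms(7,5) assms(10)[symmetric]]
    unfolding T_def X_def by (simp add: power3_eq_cube)
  ultimately have "cnj (T ^ card I) = of_real (1 / X) * Q ^ 3" by simp
  with \<open>Q \<in> \<real>\<close> have "cnj (T ^ card I) \<in> \<real>" by simp
  then show ?thesis unfolding T_def using Reals_cnj_iff by force
qed

lemma ETF_cinner_self:
  assumes "is_ETF n \<phi>" and "j \<in> {1..n}"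
  shows "cinner (\<phi> j) (\<phi> j) = 1"
proof -
  have "cnorm (\<phi> j) = 1" using assms unfolding is_ETF_def by blast
  then have "Re (cinner (\<phi> j) (\<phi> j)) = 1" unfolding cnorm_def by simp
  then show ?thesis by (simp add: cinner_self_eq_sum_norm)
qed

text \<open>Welch bound equality: expand \<phi> j in the tight frame and pair it with \<phi> j.\<close>
lemma ETF_cinner_norm_sq:
  fixes \<phi> :: "nat \<Rightarrow> complex ^ 'd"
  assumes ETF: "is_ETF n \<phi>" and j: "j \<in> {1..n}" and k: "k \<in> {1..n}" and "j \<noteq> k"
  shows "(cmod (cinner (\<phi> j) (\<phi> k)))\<^sup>2 = (real n - CARD('d)) / (CARD('d) * (real n - 1))"
proof -
  define d where "d = real CARD('d)"
  define c where "c = complex_of_real (d / real n)"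
  obtain \<alpha> where \<alpha>: "\<forall>p\<in>{1..n}. \<forall>q\<in>{1..n}. p \<noteq> q \<longrightarrow> cmod (cinner (\<phi> p) (\<phi> q)) = \<alpha>"
    using ETF unfolding is_ETF_def by blast
  have norm_sq: "(\<Sum>q\<in>{1..n}. (cmod (cinner (\<phi> j) (\<phi> q)))\<^sup>2) = 1 + (real n - 1) * \<alpha>\<^sup>2"
  proof -
    have "(\<Sum>q\<in>{1..n}. (cmod (cinner (\<phi> j) (\<phi> q)))\<^sup>2)
        = (cmod (cinner (\<phi> j) (\<phi> j)))\<^sup>2 + (\<Sum>q\<in>{1..n} - {j}. \<alpha>\<^sup>2)"
      using j \<alpha> by (simp add: sum.remove)
    then show ?thesis using ETF_cinner_self[OF ETF j] j by (simp add: of_nat_diff)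
  qed
  have frame: "\<phi> j = (\<Sum>q\<in>{1..n}. (c * cinner (\<phi> j) (\<phi> q)) *s \<phi> q)"
    using ETF unfolding is_ETF_def c_def d_def by blast
  have "1 = cinner (\<phi> j) (\<phi> j)" using ETF_cinner_self[OF ETF j] by simp
  also have "\<dots> = cinner (\<Sum>q\<in>{1..n}. (c * cinner (\<phi> j) (\<phi> q)) *s \<phi> q) (\<phi> j)"
    using frame by (rule arg_cong)
  also have "\<dots> = (\<Sum>q\<in>{1..n}. c * (cinner (\<phi> j) (\<phi> q) * cnj (cinner (\<phi> j) (\<phi> q))))"
    by (simp add: cinner_sum_left cinner_smult_left cnj_cinner mult.assoc)
  also have "\<dots> = c * of_real (\<Sum>q\<in>{1..n}. (cmod (cinner (\<phi> j) (\<phi> q)))\<^sup>2)"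
    by (simp only: complex_norm_square[symmetric] of_real_sum sum_distrib_left)
  finally have "1 = d / real n * (1 + (real n - 1) * \<alpha>\<^sup>2)"
    unfolding c_def norm_sq by (metis of_real_eq_1_iff of_real_mult)
  moreover have "real n > 1" "d > 0" using j k \<open>j \<noteq> k\<close> unfolding d_def by auto
  ultimately have "\<alpha>\<^sup>2 = (real n - d) / (d * (real n - 1))"
    by (simp add: field_simps)
  then show ?thesis using \<alpha> j k \<open>j \<noteq> k\<close> unfolding d_def by simp
qed

lemma sym_unitary_cinner_phases:
  assumes U: "sym_unitary n \<phi> U \<sigma>" and unit: "\<forall>j\<in>{1..n}. cinner (\<phi> j) (\<phi> j) = 1"
  shows "\<exists>t. (\<forall>p\<in>{1..n}. cmod (t p) = 1) \<and> (\<forall>p\<in>{1..n}. \<forall>q\<in>{1..n}.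
     cinner (\<phi> (\<sigma> p)) (\<phi> (\<sigma> q)) = t p * cnj (t q) * cinner (\<phi> p) (\<phi> q))"
proof -
  have \<sigma>: "\<sigma> permutes {1..n}" and "unitary_mat U"
    and conj: "\<forall>j\<in>{1..n}. U ** outer (\<phi> j) ** adjoint_mat U = outer (\<phi> (\<sigma> j))"
    using U unfolding sym_unitary_def by auto
  have "\<forall>p\<in>{1..n}. \<exists>t. cmod t = 1 \<and> \<phi> (\<sigma> p) = t *s (U *v \<phi> p)"
  proof
    fix p assume p: "p \<in> {1..n}"
    show "\<exists>t. cmod t = 1 \<and> \<phi> (\<sigma> p) = t *s (U *v \<phi> p)"
    proof (rule outer_eq_imp_unimodular_multiple)
      show "outer (U *v \<phi> p) = outer (\<phi> (\<sigma> p))"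
        using conj p by (simp add: outer_conjugate)
      show "cinner (\<phi> (\<sigma> p)) (\<phi> (\<sigma> p)) = 1"
        using unit p permutes_in_image[OF \<sigma>] by simp
    qed
  qed
  from bchoice[OF this] obtain t
    where t: "\<forall>p\<in>{1..n}. cmod (t p) = 1 \<and> \<phi> (\<sigma> p) = t p *s (U *v \<phi> p)" ..
  with \<open>unitary_mat U\<close> show ?thesis
    by (intro exI[of _ t]) (simp add: cinner_smult_left cinner_smult_right cinner_unitary mult_ac)
qed

lemma doubly_transitive_phase_invariant_const:
  assumes "doubly_transitive n \<phi>" and unit: "\<forall>j\<in>{1..n}. cinner (\<phi> j) (\<phi> j) = 1"
    and "p \<in> {1..n}" "q \<in> {1..n}" "p' \<in> {1..n}" "q' \<in> {1..n}" "p \<noteq> q" "p' \<noteq> q'"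
  shows "phase_invariant {1..n} (\<lambda>p q. cinner (\<phi> p) (\<phi> q)) p' q'
    = phase_invariant {1..n} (\<lambda>p q. cinner (\<phi> p) (\<phi> q)) p q"
proof -
  obtain U \<sigma> where U: "sym_unitary n \<phi> U \<sigma>" and "\<sigma> p = p'" "\<sigma> q = q'"
    using assms unfolding doubly_transitive_def by blast
  moreover obtain t where "\<forall>p\<in>{1..n}. cmod (t p) = 1" and "\<forall>p\<in>{1..n}. \<forall>q\<in>{1..n}.
      cinner (\<phi> (\<sigma> p)) (\<phi> (\<sigma> q)) = t p * cnj (t q) * cinner (\<phi> p) (\<phi> q)"
    using sym_unitary_cinner_phases[OF U unit] by blast
  moreover have "\<sigma> permutes {1..n}" using U unfolding sym_unitary_def by simp
  ultimately show ?thesis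
    using phase_invariant_permute[of "{1..n}" \<sigma> p q t] assms(3,4) by simp
qed

lemma power_real_imp_root_of_unity_multiple:
  assumes "c > 0" and "cmod z = c" and "z ^ n \<in> \<real>"
  shows "\<exists>\<zeta>. \<zeta> ^ (2 * n) = 1 \<and> z = \<zeta> * of_real c"
proof -
  define \<zeta> where "\<zeta> = z / of_real c"
  have "\<zeta> ^ n \<in> \<real>" "cmod \<zeta> = 1"
    unfolding \<zeta>_def using assms by (simp_all add: power_divide norm_divide)
  then obtain r where r: "\<zeta> ^ n = of_real r" and "\<bar>r\<bar> = 1"
    by (metis Reals_cases norm_of_real norm_power power_one)
  then have "\<zeta> ^ (2 * n) = of_real (r\<^sup>2)"
    by (simp add: power_mult mult.commute[of 2])
  also have "\<dots> = 1" using \<open>\<bar>r\<bar> = 1\<close> by (simp add: power2_eq_1_iff abs_if split: if_splits)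
  finally show ?thesis unfolding \<zeta>_def using assms(1) by auto
qed

lemma sqrt_cube_eq_powr_three_halves:
  fixes x :: real
  assumes "0 \<le> x"
  shows "sqrt x ^ 3 = x powr (3/2)"
  using assms by (simp add: powr_half_sqrt_powr real_sqrt_power)

lemma ETF_cinner_norm:
  fixes \<phi> :: "nat \<Rightarrow> complex ^ 'd"
  assumes "is_ETF n \<phi>" and "j \<in> {1..n}" and "k \<in> {1..n}" and "j \<noteq> k"
  shows "cmod (cinner (\<phi> j) (\<phi> k)) = sqrt ((real n - CARD('d)) / (CARD('d) * (real n - 1)))"
  using real_sqrt_unique[OF ETF_cinner_norm_sq[OF assms] norm_ge_zero] by simp

lemma welch_bound_pos:
  assumes "CARD('d::finite) < n"
  shows "0 < (real n - CARD('d)) / (CARD('d) * (real n - 1))"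
proof -
  have "0 < CARD('d)" by simp
  with assms have "1 < n" by linarith
  with assms show ?thesis by (auto intro!: divide_pos_pos mult_pos_pos)
qed

lemma ETF_triangle_norm:
  fixes \<phi> :: "nat \<Rightarrow> complex ^ 'd"
  assumes "is_ETF n \<phi>" and "CARD('d) < n"
    and "j \<in> {1..n}" "k \<in> {1..n}" "l \<in> {1..n}" "j \<noteq> k" "k \<noteq> l" "j \<noteq> l"
  shows "cmod (cinner (\<phi> j) (\<phi> k) * cinner (\<phi> k) (\<phi> l) * cinner (\<phi> l) (\<phi> j))
    = ((real n - CARD('d)) / (CARD('d) * (real n - 1))) powr (3/2)"
  using ETF_cinner_norm[OF assms(1,3,4,6)] ETF_cinner_norm[OF assms(1,4,5,7)]
    ETF_cinner_norm[OF assms(1,5,3) assms(8)[symmetric]] welch_bound_pos[OF assms(2)]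
  by (simp add: norm_mult sqrt_cube_eq_powr_three_halves[symmetric] power3_eq_cube)

lemma doubly_transitive_ETF_triangle_power_real:
  fixes \<phi> :: "nat \<Rightarrow> complex ^ 'd"
  assumes "is_ETF n \<phi>" and "doubly_transitive n \<phi>" and "CARD('d) < n"
    and "j \<in> {1..n}" "k \<in> {1..n}" "l \<in> {1..n}" "j \<noteq> k" "k \<noteq> l" "j \<noteq> l"
  shows "(cinner (\<phi> j) (\<phi> k) * cinner (\<phi> k) (\<phi> l) * cinner (\<phi> l) (\<phi> j)) ^ n \<in> \<real>"
proof -
  have "(cinner (\<phi> j) (\<phi> k) * cinner (\<phi> k) (\<phi> l) * cinner (\<phi> l) (\<phi> j)) ^ card {1..n} \<in> \<real>"
  proof (rule triangle_power_real_if_phase_invariant_const)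
    show "\<forall>p\<in>{1..n}. \<forall>q\<in>{1..n}. p \<noteq> q \<longrightarrow> cinner (\<phi> p) (\<phi> q) \<noteq> 0"
      using ETF_cinner_norm[OF assms(1)] welch_bound_pos[OF assms(3)] by fastforce
    show "\<forall>p\<in>{1..n}. \<forall>q\<in>{1..n}. \<forall>p'\<in>{1..n}. \<forall>q'\<in>{1..n}. p \<noteq> q \<longrightarrow> p' \<noteq> q' \<longrightarrow>
        phase_invariant {1..n} (\<lambda>p q. cinner (\<phi> p) (\<phi> q)) p q
      = phase_invariant {1..n} (\<lambda>p q. cinner (\<phi> p) (\<phi> q)) p' q'"
      using doubly_transitive_phase_invariant_const[OF assms(2)] ETF_cinner_self[OF assms(1)]
      by blast
  qed (use assms(4-) in \<open>auto simp: cnj_cinner\<close>)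
  then show ?thesis by simp
qed

theorem mainTheorem2:
  fixes n :: nat and \<phi> :: "nat \<Rightarrow> complex ^ 'd"
  assumes "is_ETF n \<phi>" and "doubly_transitive n \<phi>" and "n > CARD('d)"
  shows "\<forall>j\<in>{1..n}. \<forall>k\<in>{1..n}. \<forall>l\<in>{1..n}. j \<noteq> k \<and> k \<noteq> l \<and> j \<noteq> l \<longrightarrow>
    (\<exists>\<zeta>::complex. \<zeta> ^ (2 * n) = 1 \<and>
      cinner (\<phi> j) (\<phi> k) * cinner (\<phi> k) (\<phi> l) * cinner (\<phi> l) (\<phi> j) =
      \<zeta> * complex_of_real (((real n - real CARD('d)) / (real CARD('d) * (real n - 1))) powr (3/2)))"
proof (intro ballI impI, elim conjE)
  fix j k l assume jkl: "j \<in> {1..n}" "k \<in> {1..n}" "l \<in> {1..n}" "j \<noteq> k" "k \<noteq> l" "j \<noteq> l"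
  show "\<exists>\<zeta>. \<zeta> ^ (2 * n) = 1 \<and>
      cinner (\<phi> j) (\<phi> k) * cinner (\<phi> k) (\<phi> l) * cinner (\<phi> l) (\<phi> j) =
      \<zeta> * of_real (((real n - CARD('d)) / (CARD('d) * (real n - 1))) powr (3/2))"
  proof (rule power_real_imp_root_of_unity_multiple)
    show "0 < ((real n - CARD('d)) / (CARD('d) * (real n - 1))) powr (3/2)"
      using welch_bound_pos[OF assms(3)] by (metis powr_gt_zero order_less_irrefl)
  qed (fact ETF_triangle_norm[OF assms(1,3) jkl] doubly_transitive_ETF_triangle_power_real[OF assms jkl])+
qed

end
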